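(* Let $X=X(s)$ be a strictly convex $C^{(3)}$ plane curve, parametrized by arclength, such that for some function $\lambda(s)$ and for all $s$ and all sufficiently small $h_1,h_2$ (with $X(s),X(s+h_1),X(s+h_2)$ distinct) we have $U(s,h_1,h_2)=\lambda(s)T(s,h_1,h_2)$. Fix a point $A\in X$ and choose Cartesian coordinates with $A$ at the origin and the $x$-axis equal to the tangent line of $X$ at $A$, so that near $A$ the curve $X$ is the graph of a non-negative strictly convex $C^{(3)}$ function $f$ with $f(0)=f'(0)=0$ and $f''(0)>0$. Then for all $t$ in some open interval around $0$, $$2f(t)^2f''(t)=f'(t)^2\bigl(tf'(t)-f(t)\bigr).$$
   Context: A simple convex plane curve is strictly convex if it is of class $C^{(3)}$ and has positive curvature with respect to the unit normal pointing to the convex side. For three distinct points $A=X(s)$, $A_i=X(s+h_i)$ ($i=1,2$) on $X$, let $\ell,\ell_1,\ell_2$ be the tangent lines of $X$ at $A,A_1,A_2$, and let $B=\ell_1\cap\ell_2$, $B_1=\ell\cap\ell_1$, $B_2=\ell\cap\ell_2$. Define $T(s,h_1,h_2)=|\triangle AA_1A_2|$ and $U(s,h_1,h_2)=|\triangle BB_1B_2|$ (areas). *)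

theory Defs
  imports "HOL-Analysis.Analysis"
begin

definition det2 :: "real \<times> real \<Rightarrow> real \<times> real \<Rightarrow> real" where
  "det2 u v = fst u * snd v - snd u * fst v"

definition tri_area :: "real \<times> real \<Rightarrow> real \<times> real \<Rightarrow> real \<times> real \<Rightarrow> real" where
  "tri_area P Q R = \<bar>det2 (Q - P) (R - P)\<bar> / 2"

definition vel :: "(real \<Rightarrow> real \<times> real) \<Rightarrow> real \<Rightarrow> real \<times> real" where
  "vel X s = vector_derivative X (at s)"

definition acc :: "(real \<Rightarrow> real \<times> real) \<Rightarrow> real \<Rightarrow> real \<times> real" where
  "acc X s = vector_derivative (vel X) (at s)"

text \<open>Intersection point of the tangent lines of X at X a and at X b
  (line X a + t X'(a) meets line X b + r X'(b)).\<close>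
definition tangent_meet :: "(real \<Rightarrow> real \<times> real) \<Rightarrow> real \<Rightarrow> real \<Rightarrow> real \<times> real" where
  "tangent_meet X a b =
     X a + (det2 (X b - X a) (vel X b) / det2 (vel X a) (vel X b)) *\<^sub>R vel X a"

text \<open>T(s,h1,h2) = area of triangle A A1 A2; U(s,h1,h2) = area of triangle B B1 B2,
  with B = l1 \<inter> l2, B1 = l \<inter> l1, B2 = l \<inter> l2.\<close>
definition T_area :: "(real \<Rightarrow> real \<times> real) \<Rightarrow> real \<Rightarrow> real \<Rightarrow> real \<Rightarrow> real" where
  "T_area X s h1 h2 = tri_area (X s) (X (s + h1)) (X (s + h2))"

definition U_area :: "(real \<Rightarrow> real \<times> real) \<Rightarrow> real \<Rightarrow> real \<Rightarrow> real \<Rightarrow> real" where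
  "U_area X s h1 h2 =
     tri_area (tangent_meet X (s + h1) (s + h2)) (tangent_meet X s (s + h1))
              (tangent_meet X s (s + h2))"

definition C3_curve_on :: "(real \<Rightarrow> real \<times> real) \<Rightarrow> real set \<Rightarrow> bool" where
  "C3_curve_on X I \<longleftrightarrow> (\<exists>D1 D2 D3. (\<forall>s\<in>I.
      (X has_vector_derivative D1 s) (at s) \<and>
      (D1 has_vector_derivative D2 s) (at s) \<and>
      (D2 has_vector_derivative D3 s) (at s)) \<and> continuous_on I D3)"

definition C3_fun_on :: "(real \<Rightarrow> real) \<Rightarrow> real set \<Rightarrow> bool" where
  "C3_fun_on f S \<longleftrightarrow> (\<exists>D1 D2 D3. (\<forall>t\<in>S.
      (f has_real_derivative D1 t) (at t) \<and>
      (D1 has_real_derivative D2 t) (at t) \<and>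
      (D2 has_real_derivative D3 t) (at t)) \<and> continuous_on S D3)"

definition strictly_convex_fun_on :: "(real \<Rightarrow> real) \<Rightarrow> real set \<Rightarrow> bool" where
  "strictly_convex_fun_on f S \<longleftrightarrow> (\<forall>x\<in>S. \<forall>y\<in>S. \<forall>u. x \<noteq> y \<and> 0 < u \<and> u < 1 \<longrightarrow>
      f (u * x + (1 - u) * y) < u * f x + (1 - u) * f y)"

definition simple_convex_curve :: "(real \<Rightarrow> real \<times> real) \<Rightarrow> real set \<Rightarrow> bool" where
  "simple_convex_curve X I \<longleftrightarrow>
     open I \<and> is_interval I \<and> I \<noteq> {} \<and> continuous_on I X \<and>
     (inj_on X I \<or> (I = UNIV \<and> (\<exists>L>0. (\<forall>s. X (s + L) = X s) \<and> inj_on X {0..<L}))) \<and>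
     (\<exists>C. convex C \<and> X ` I \<subseteq> frontier C)"

text \<open>Strictly convex: C^3 and positive curvature w.r.t. the normal pointing to the
  convex side; for a convex curve this is equivalent to nonvanishing
  det(X', X'').\<close>
definition strictly_convex_curve :: "(real \<Rightarrow> real \<times> real) \<Rightarrow> real set \<Rightarrow> bool" where
  "strictly_convex_curve X I \<longleftrightarrow>
     simple_convex_curve X I \<and> C3_curve_on X I \<and>
     (\<forall>s\<in>I. det2 (vel X s) (acc X s) \<noteq> 0)"

definition arclength_param :: "(real \<Rightarrow> real \<times> real) \<Rightarrow> real set \<Rightarrow> bool" where
  "arclength_param X I \<longleftrightarrow> (\<forall>s\<in>I. norm (vel X s) = 1)"

end

theory Submission
  imports Defs
begin

text \<open>Near A the curve is the graph of f: a frontier point of a convex set cannot lie strictly inside a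
  triangle of other boundary points, which pins every curve point near A to the graph. With
  \<open>A\<^sub>i = (t\<^sub>i, f t\<^sub>i)\<close>, twice the contact triangle has area \<open>\<bar>t\<^sub>1 f t\<^sub>2 - t\<^sub>2 f t\<^sub>1\<bar>\<close>, while the
  tangent triangle has \<open>B\<^sub>1, B\<^sub>2\<close> on the axis at the tangent intercepts \<open>p t = t - f t / f' t\<close> and B at
  some height h, so twice its area is \<open>\<bar>h\<bar> \<bar>p t\<^sub>2 - p t\<^sub>1\<bar>\<close>. Dividing U = \<lambda> T by \<open>t\<^sub>2 - t\<^sub>1\<close> and
  letting \<open>t\<^sub>2 \<rightarrow> t\<^sub>1\<close> (so \<open>B \<rightarrow> A\<^sub>1\<close>) gives \<open>f\<^sup>2 f'' = \<lambda> f'\<^sup>2 (t f' - f)\<close>, because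
  \<open>p' = f f'' / f'\<^sup>2\<close>; comparing leading Taylor terms at 0 then forces \<lambda> = 1/2.\<close>

section \<open>Coordinates in an orthonormal frame\<close>

lemma det2_lincomb:
  "det2 (x *\<^sub>R e + y *\<^sub>R n) (x' *\<^sub>R e + y' *\<^sub>R n) = (x * y' - y * x') * det2 e n"
  by (cases e; cases n) (simp add: det2_def algebra_simps)

lemma det2_scaleR_same: "det2 (a *\<^sub>R w) (b *\<^sub>R w) = 0"
  by (cases w) (simp add: det2_def)

lemma det2_sq_Gram: "(det2 u v)\<^sup>2 = (norm u)\<^sup>2 * (norm v)\<^sup>2 - (inner u v)\<^sup>2"
  by (cases u; cases v) (simp add: det2_def norm_Pair inner_Pair power2_eq_square algebra_simps)

lemma orthogonal_det2_nonzero_imp_zero: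
  fixes a u v :: "real \<times> real"
  assumes "det2 u v \<noteq> 0" "inner a u = 0" "inner a v = 0"
  shows "a = 0"
proof -
  obtain a1 a2 u1 u2 v1 v2 where a: "a = (a1, a2)" and u: "u = (u1, u2)" and v: "v = (v1, v2)"
    by (cases a; cases u; cases v)
  have "a1 * det2 u v = inner a u * v2 - inner a v * u2"
       "a2 * det2 u v = inner a v * u1 - inner a u * v1"
    by (simp_all add: a u v det2_def inner_Pair algebra_simps)
  then show ?thesis using assms by (simp add: a zero_prod_def)
qed

lemma orthonormal_frame_det2:
  assumes "norm e = 1" "norm n = 1" "inner e n = 0"
  shows "det2 e n \<noteq> 0"
  using det2_sq_Gram[of e n] assms by auto

lemma orthonormal_frame_expand:
  fixes e n z :: "real \<times> real"
  assumes "norm e = 1" "norm n = 1" "inner e n = 0"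
  shows "z = inner z e *\<^sub>R e + inner z n *\<^sub>R n"
proof -
  have ee: "inner e e = 1" and nn: "inner n n = 1"
    using assms(1,2) by (simp_all add: dot_square_norm)
  have "z - (inner z e *\<^sub>R e + inner z n *\<^sub>R n) = 0"
    by (rule orthogonal_det2_nonzero_imp_zero[OF orthonormal_frame_det2[OF assms]])
       (use ee nn assms(3) in \<open>simp_all add: inner_diff_left inner_add_left inner_commute[of e n]\<close>)
  then show ?thesis by simp
qed

lemma frame_coords_eq_iff:
  assumes "det2 e n \<noteq> 0"
  shows "Z + x *\<^sub>R e + y *\<^sub>R n = Z + x' *\<^sub>R e + y' *\<^sub>R n \<longleftrightarrow> x = x' \<and> y = y'"
proof
  assume "Z + x *\<^sub>R e + y *\<^sub>R n = Z + x' *\<^sub>R e + y' *\<^sub>R n"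
  then have "(x - x') *\<^sub>R e + (y - y') *\<^sub>R n = 0"
    by (simp add: algebra_simps)
  then have "det2 ((x - x') *\<^sub>R e + (y - y') *\<^sub>R n) (0 *\<^sub>R e + 1 *\<^sub>R n) = 0"
       "det2 ((x - x') *\<^sub>R e + (y - y') *\<^sub>R n) (1 *\<^sub>R e + 0 *\<^sub>R n) = 0"
    by (simp_all add: det2_def)
  then show "x = x' \<and> y = y'"
    using assms unfolding det2_lincomb by simp
qed simp

lemma tri_area_frame:
  "tri_area (Z + x1 *\<^sub>R e + y1 *\<^sub>R n) (Z + x2 *\<^sub>R e + y2 *\<^sub>R n) (Z + x3 *\<^sub>R e + y3 *\<^sub>R n)
     = \<bar>det2 e n\<bar> * \<bar>(x2 - x1) * (y3 - y1) - (y2 - y1) * (x3 - x1)\<bar> / 2"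
proof -
  have d: "(Z + x2 *\<^sub>R e + y2 *\<^sub>R n) - (Z + x1 *\<^sub>R e + y1 *\<^sub>R n) = (x2 - x1) *\<^sub>R e + (y2 - y1) *\<^sub>R n"
       "(Z + x3 *\<^sub>R e + y3 *\<^sub>R n) - (Z + x1 *\<^sub>R e + y1 *\<^sub>R n) = (x3 - x1) *\<^sub>R e + (y3 - y1) *\<^sub>R n"
    by (simp_all add: algebra_simps)
  show ?thesis unfolding tri_area_def d det2_lincomb by (simp add: abs_mult)
qed

text \<open>For the graph of y with slopes m: \<open>tangent_xint y m t\<close> is where the tangent at t meets the
  horizontal axis (the first coordinate of \<open>B\<^sub>1\<close>, \<open>B\<^sub>2\<close>), and \<open>tangent_meet_height y m t\<^sub>1 t\<^sub>2\<close> is the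
  height of the intersection B of the tangents at \<open>t\<^sub>1\<close> and \<open>t\<^sub>2\<close>.\<close>

definition tangent_xint :: "(real \<Rightarrow> real) \<Rightarrow> (real \<Rightarrow> real) \<Rightarrow> real \<Rightarrow> real" where
  "tangent_xint y m t = (t * m t - y t) / m t"

definition tangent_meet_height :: "(real \<Rightarrow> real) \<Rightarrow> (real \<Rightarrow> real) \<Rightarrow> real \<Rightarrow> real \<Rightarrow> real" where
  "tangent_meet_height y m t1 t2 = y t1 + ((t2 - t1) * m t2 - (y t2 - y t1)) / (m t2 - m t1) * m t1"

lemma tangent_meet_frame:
  assumes "det2 e n \<noteq> 0" "ca \<noteq> 0" "cb \<noteq> 0"
    and Xa: "X a = Z + ta *\<^sub>R e + ya *\<^sub>R n" and Xb: "X b = Z + tb *\<^sub>R e + yb *\<^sub>R n"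
    and va: "vel X a = ca *\<^sub>R (e + ma *\<^sub>R n)" and vb: "vel X b = cb *\<^sub>R (e + mb *\<^sub>R n)"
  defines "\<mu> \<equiv> ((tb - ta) * mb - (yb - ya)) / (mb - ma)"
  shows "tangent_meet X a b = Z + (ta + \<mu>) *\<^sub>R e + (ya + \<mu> * ma) *\<^sub>R n"
proof -
  have d: "X b - X a = (tb - ta) *\<^sub>R e + (yb - ya) *\<^sub>R n"
    and va': "vel X a = ca *\<^sub>R e + (ca * ma) *\<^sub>R n" and vb': "vel X b = cb *\<^sub>R e + (cb * mb) *\<^sub>R n"
    using Xa Xb va vb by (simp_all add: algebra_simps)
  have "det2 (X b - X a) (vel X b) / det2 (vel X a) (vel X b)
      = (cb * ((tb - ta) * mb - (yb - ya)) * det2 e n) / (ca * cb * (mb - ma) * det2 e n)"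
    unfolding d va' vb' det2_lincomb by (simp add: algebra_simps)
  also have "\<dots> = \<mu> / ca"
    unfolding \<mu>_def using assms by (cases "mb = ma") (simp_all add: field_simps)
  finally show ?thesis
    unfolding tangent_meet_def Xa va' using \<open>ca \<noteq> 0\<close> by (simp add: algebra_simps)
qed

lemma T_area_frame:
  assumes "X (s + h1) = X s + t1 *\<^sub>R e + y1 *\<^sub>R n" "X (s + h2) = X s + t2 *\<^sub>R e + y2 *\<^sub>R n"
  shows "T_area X s h1 h2 = \<bar>det2 e n\<bar> * \<bar>t1 * y2 - t2 * y1\<bar> / 2"
  using tri_area_frame[of "X s" 0 e 0 n t1 y1 t2 y2] unfolding T_area_def assms by (simp add: mult.commute[of y1])

lemma U_area_frame:
  assumes D: "det2 e n \<noteq> 0" and v0: "vel X s = c0 *\<^sub>R e" "c0 \<noteq> 0"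
    and X1: "X (s + h1) = X s + t1 *\<^sub>R e + y t1 *\<^sub>R n"
    and v1: "vel X (s + h1) = c1 *\<^sub>R (e + m t1 *\<^sub>R n)" "c1 \<noteq> 0"
    and X2: "X (s + h2) = X s + t2 *\<^sub>R e + y t2 *\<^sub>R n"
    and v2: "vel X (s + h2) = c2 *\<^sub>R (e + m t2 *\<^sub>R n)" "c2 \<noteq> 0"
  shows "U_area X s h1 h2 = \<bar>det2 e n\<bar> *
           \<bar>tangent_meet_height y m t1 t2 * (tangent_xint y m t2 - tangent_xint y m t1)\<bar> / 2"
proof -
  have X0: "X s = X s + 0 *\<^sub>R e + 0 *\<^sub>R n" and v0': "vel X s = c0 *\<^sub>R (e + 0 *\<^sub>R n)"
    using v0 by simp_all
  define \<mu> where "\<mu> = ((t2 - t1) * m t2 - (y t2 - y t1)) / (m t2 - m t1)"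
  have B: "tangent_meet X (s + h1) (s + h2) = X s + (t1 + \<mu>) *\<^sub>R e + (y t1 + \<mu> * m t1) *\<^sub>R n"
    unfolding \<mu>_def by (rule tangent_meet_frame[OF D v1(2) v2(2) X1 X2 v1(1) v2(1)])
  have B1: "tangent_meet X s (s + h1) = X s + (0 + tangent_xint y m t1) *\<^sub>R e + (0 + tangent_xint y m t1 * 0) *\<^sub>R n"
    using tangent_meet_frame[OF D v0(2) v1(2) X0 X1 v0' v1(1)] by (simp add: tangent_xint_def)
  have B2: "tangent_meet X s (s + h2) = X s + (0 + tangent_xint y m t2) *\<^sub>R e + (0 + tangent_xint y m t2 * 0) *\<^sub>R n"
    using tangent_meet_frame[OF D v0(2) v2(2) X0 X2 v0' v2(1)] by (simp add: tangent_xint_def)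
  show ?thesis
    unfolding U_area_def B B1 B2 tri_area_frame tangent_meet_height_def \<mu>_def[symmetric]
    by (simp add: algebra_simps)
qed

section \<open>Frontier points of planar convex sets\<close>

lemma convex_frontier_not_in_open_triangle:
  fixes C :: "(real \<times> real) set"
  assumes cvx: "convex C" and Q: "Q0 \<in> closure C" "Q1 \<in> closure C" "Q2 \<in> closure C"
    and P: "P \<in> frontier C"
    and comb: "P = a0 *\<^sub>R Q0 + a1 *\<^sub>R Q1 + a2 *\<^sub>R Q2"
    and pos: "a0 > 0" "a1 > 0" "a2 > 0" "a0 + a1 + a2 = 1"
    and det: "det2 (Q1 - Q0) (Q2 - Q0) \<noteq> 0"
  shows False
proof (cases "P \<in> rel_interior C")
  case False
  have "P \<in> closure C" using P by (simp add: frontier_def)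
  then obtain a where "a \<noteq> 0" and sup: "\<And>y. y \<in> closure C \<Longrightarrow> a \<bullet> P \<le> a \<bullet> y"
    using supporting_hyperplane_relative_frontier[OF cvx _ False] by metis
  define u where "u Q = a \<bullet> Q - a \<bullet> P" for Q
  have u: "u Q0 \<ge> 0" "u Q1 \<ge> 0" "u Q2 \<ge> 0" using sup Q by (auto simp: u_def)
  have "a0 * u Q0 + a1 * u Q1 + a2 * u Q2 = a \<bullet> P - (a0 + a1 + a2) * (a \<bullet> P)"
    unfolding u_def comb by (simp add: inner_add_right algebra_simps)
  then have "a0 * u Q0 + a1 * u Q1 + a2 * u Q2 = 0" using pos(4) by simp
  moreover have "a0 * u Q0 \<ge> 0" "a1 * u Q1 \<ge> 0" "a2 * u Q2 \<ge> 0" using u pos by simp_all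
  ultimately have "u Q0 = 0" "u Q1 = 0" "u Q2 = 0" using pos
    by (simp_all add: add_nonneg_eq_0_iff)
  then have "a \<bullet> (Q1 - Q0) = 0" "a \<bullet> (Q2 - Q0) = 0"
    unfolding u_def by (simp_all add: inner_diff_right)
  then show False using orthogonal_det2_nonzero_imp_zero[OF det] \<open>a \<noteq> 0\<close> by blast
next
  case True
  have "P \<notin> interior C" using P by (simp add: frontier_def)
  then have "rel_interior C \<noteq> interior C" using True by blast
  then have "affine hull C \<noteq> UNIV" using rel_interior_interior by blast
  then have "aff_dim C \<le> 1"
    using aff_dim_eq_full[of C] aff_dim_le_DIM[of C] by simp
  then have "collinear (closure C)" by (simp add: collinear_aff_dim)
  then have "collinear {Q0, Q1, Q2}" by (rule collinear_subset) (use Q in auto)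
  then obtain w where w: "\<And>x y. x \<in> {Q0, Q1, Q2} \<Longrightarrow> y \<in> {Q0, Q1, Q2} \<Longrightarrow> \<exists>c. x - y = c *\<^sub>R w"
    unfolding collinear_def by blast
  obtain c1 c2 where "Q1 - Q0 = c1 *\<^sub>R w" "Q2 - Q0 = c2 *\<^sub>R w" using w by blast
  then show False using det det2_scaleR_same by metis
qed

lemma convex_frontier_not_between_point_and_chord:
  fixes C :: "(real \<times> real) set"
  assumes cvx: "convex C" and D: "det2 e n \<noteq> 0"
    and Q0: "Z + t *\<^sub>R e + ya *\<^sub>R n \<in> closure C"
    and Q1: "Z + (-b) *\<^sub>R e + yl *\<^sub>R n \<in> closure C"
    and Q2: "Z + b *\<^sub>R e + yr *\<^sub>R n \<in> closure C"
    and P: "Z + t *\<^sub>R e + yp *\<^sub>R n \<in> frontier C"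
    and t: "\<bar>t\<bar> < b" and y: "ya < yp" "2 * b * yp < (b - t) * yl + (b + t) * yr"
  shows False
proof -
  have b: "b > 0" using t by linarith
  define ch where "ch = ((b - t) * yl + (b + t) * yr) / (2 * b)"
  have ch: "yp < ch" using y b unfolding ch_def by (simp add: field_simps)
  define \<mu> where "\<mu> = (ch - yp) / (ch - ya)"
  have \<mu>: "0 < \<mu>" "\<mu> < 1" using ch y unfolding \<mu>_def by (auto simp: field_simps)
  define a1 where "a1 = (1 - \<mu>) * (b - t) / (2 * b)"
  define a2 where "a2 = (1 - \<mu>) * (b + t) / (2 * b)"
  have pos: "a1 > 0" "a2 > 0" using \<mu> t b unfolding a1_def a2_def by auto
  have sum: "\<mu> + a1 + a2 = 1" and cx: "\<mu> * t + a1 * (-b) + a2 * b = t"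
    using b unfolding a1_def a2_def by (simp_all add: field_simps)
  have cy: "\<mu> * ya + a1 * yl + a2 * yr = yp"
  proof -
    have "a1 * yl + a2 * yr = (1 - \<mu>) * ch"
      using b unfolding a1_def a2_def ch_def by (simp add: field_simps)
    moreover have "\<mu> * (ch - ya) = ch - yp" using ch y unfolding \<mu>_def by simp
    ultimately show ?thesis by (simp add: algebra_simps)
  qed
  have "(\<mu> + a1 + a2) *\<^sub>R Z + (\<mu> * t + a1 * (-b) + a2 * b) *\<^sub>R e + (\<mu> * ya + a1 * yl + a2 * yr) *\<^sub>R n
      = \<mu> *\<^sub>R (Z + t *\<^sub>R e + ya *\<^sub>R n) + a1 *\<^sub>R (Z + (-b) *\<^sub>R e + yl *\<^sub>R n) + a2 *\<^sub>R (Z + b *\<^sub>R e + yr *\<^sub>R n)"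
    by (simp add: algebra_simps)
  then have comb: "Z + t *\<^sub>R e + yp *\<^sub>R n
      = \<mu> *\<^sub>R (Z + t *\<^sub>R e + ya *\<^sub>R n) + a1 *\<^sub>R (Z + (-b) *\<^sub>R e + yl *\<^sub>R n) + a2 *\<^sub>R (Z + b *\<^sub>R e + yr *\<^sub>R n)"
    unfolding sum cx cy by simp
  have d1: "(Z + (-b) *\<^sub>R e + yl *\<^sub>R n) - (Z + t *\<^sub>R e + ya *\<^sub>R n) = (-b - t) *\<^sub>R e + (yl - ya) *\<^sub>R n"
    and d2: "(Z + b *\<^sub>R e + yr *\<^sub>R n) - (Z + t *\<^sub>R e + ya *\<^sub>R n) = (b - t) *\<^sub>R e + (yr - ya) *\<^sub>R n"
    by (simp_all add: algebra_simps)
  have "(-b - t) * (yr - ya) - (yl - ya) * (b - t) = -(2 * b) * (ch - ya)"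
    using b unfolding ch_def by (simp add: field_simps)
  then have "(-b - t) * (yr - ya) - (yl - ya) * (b - t) \<noteq> 0" using b ch y by simp
  then have "det2 ((Z + (-b) *\<^sub>R e + yl *\<^sub>R n) - (Z + t *\<^sub>R e + ya *\<^sub>R n))
                  ((Z + b *\<^sub>R e + yr *\<^sub>R n) - (Z + t *\<^sub>R e + ya *\<^sub>R n)) \<noteq> 0"
    unfolding d1 d2 det2_lincomb using D by simp
  then show False
    using convex_frontier_not_in_open_triangle[OF cvx Q0 Q1 Q2 P comb \<mu>(1) pos sum] by blast
qed

text \<open>If \<open>y \<noteq> f t\<close>, one of the frame points (t, y), (t, f t) lies strictly inside the triangle
  spanned by the other one and the graph points over \<open>\<plusminus>b\<close>.\<close>
lemma convex_frontier_on_graph: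
  fixes C :: "(real \<times> real) set"
  assumes cvx: "convex C" and D: "det2 e n \<noteq> 0"
    and graph: "\<And>t. \<bar>t\<bar> < d \<Longrightarrow> Z + t *\<^sub>R e + f t *\<^sub>R n \<in> frontier C"
    and conv: "strictly_convex_fun_on f {-d<..<d}"
    and b: "0 < b" "b < d" and t: "\<bar>t\<bar> < b"
    and P: "Z + t *\<^sub>R e + y *\<^sub>R n \<in> frontier C" and y: "y < f (-b)" "y < f b"
  shows "y = f t"
proof (rule ccontr)
  assume "y \<noteq> f t"
  have cl: "\<And>t. \<bar>t\<bar> < d \<Longrightarrow> Z + t *\<^sub>R e + f t *\<^sub>R n \<in> closure C"
    using graph by (simp add: frontier_def)
  have Qt: "Z + t *\<^sub>R e + f t *\<^sub>R n \<in> closure C" using cl t b by simp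
  have Qm: "Z + (-b) *\<^sub>R e + f (-b) *\<^sub>R n \<in> closure C" and Qp: "Z + b *\<^sub>R e + f b *\<^sub>R n \<in> closure C"
    using cl[of "-b"] cl[of b] b by auto
  define u where "u = (b - t) / (2 * b)"
  have "0 < u" "u < 1" using b t unfolding u_def by (auto simp: field_simps abs_less_iff)
  moreover have "-b \<in> {-d<..<d}" "b \<in> {-d<..<d}" "-b \<noteq> b" using b by auto
  ultimately have "f (u * (-b) + (1 - u) * b) < u * f (-b) + (1 - u) * f b"
    using conv unfolding strictly_convex_fun_on_def by blast
  moreover have "u * (-b) + (1 - u) * b = t" using b unfolding u_def by (simp add: field_simps)
  ultimately have "2 * b * f t < 2 * b * (u * f (-b) + (1 - u) * f b)" using b by simp
  also have "\<dots> = (b - t) * f (-b) + (b + t) * f b" using b unfolding u_def by (simp add: field_simps)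
  finally have chord: "2 * b * f t < (b - t) * f (-b) + (b + t) * f b" .
  from \<open>y \<noteq> f t\<close> consider "y < f t" | "f t < y" by linarith
  then show False
  proof cases
    case 1
    show False
      by (rule convex_frontier_not_between_point_and_chord[OF cvx D _ Qm Qp graph t 1 chord])
         (use P t b in \<open>auto simp: frontier_def\<close>)
  next
    case 2
    have "2 * b * y = (b - t) * y + (b + t) * y" by (simp add: algebra_simps)
    also have "\<dots> < (b - t) * f (-b) + (b + t) * f b"
      using y t by (intro add_strict_mono mult_strict_left_mono) auto
    finally have "2 * b * y < (b - t) * f (-b) + (b + t) * f b" .
    from convex_frontier_not_between_point_and_chord[OF cvx D Qt Qm Qp P t 2 this] show False .
  qed
qed

section \<open>The tangent-triangle relation in graph coordinates\<close>

lemma DERIV_tangent_xint: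
  assumes y: "DERIV y t :> m t" and m: "DERIV m t :> m'" and nz: "m t \<noteq> 0"
  shows "DERIV (tangent_xint y m) t :> y t * m' / (m t)\<^sup>2"
  unfolding tangent_xint_def
  by (rule DERIV_cong[OF DERIV_quotient[OF DERIV_diff[OF DERIV_mult[OF DERIV_ident m] y] m nz]])
     (use nz in \<open>simp add: power2_eq_square field_simps\<close>)

lemma tangent_meet_height_tendsto:
  assumes y: "DERIV y t :> m t" and m: "DERIV m t :> m'" and nz: "m' \<noteq> 0"
  shows "((\<lambda>k. tangent_meet_height y m t (t + k)) \<longlongrightarrow> y t) (at 0)"
proof -
  have "((\<lambda>k. (y (t + k) - y t) / k) \<longlongrightarrow> m t) (at 0)"
    and "((\<lambda>k. (m (t + k) - m t) / k) \<longlongrightarrow> m') (at 0)"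
    using y m by (simp_all add: DERIV_def)
  moreover have "((\<lambda>k. m (t + k)) \<longlongrightarrow> m t) (at 0)"
    using DERIV_isCont[OF m] by (simp add: isCont_iff)
  ultimately have "((\<lambda>k. y t + (m (t + k) - (y (t + k) - y t) / k) / ((m (t + k) - m t) / k) * m t)
      \<longlongrightarrow> y t + (m t - m t) / m' * m t) (at 0)"
    using nz by (intro tendsto_intros) auto
  moreover have "\<forall>\<^sub>F k in at 0. y t + (m (t + k) - (y (t + k) - y t) / k) / ((m (t + k) - m t) / k) * m t
      = tangent_meet_height y m t (t + k)"
    unfolding tangent_meet_height_def eventually_at_filter
  proof (intro always_eventually allI impI)
    fix k :: real assume "k \<noteq> 0"
    then have "m (t + k) - (y (t + k) - y t) / k = (k * m (t + k) - (y (t + k) - y t)) / k"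
      by (simp add: field_simps)
    with \<open>k \<noteq> 0\<close> show "y t + (m (t + k) - (y (t + k) - y t) / k) / ((m (t + k) - m t) / k) * m t
        = y t + ((t + k - t) * m (t + k) - (y (t + k) - y t)) / (m (t + k) - m t) * m t"
      by simp
  qed
  ultimately show ?thesis by (simp add: tendsto_cong)
qed

lemma tangent_relation_derivative:
  assumes f: "DERIV f t :> f' t" and f': "DERIV f' t :> f''" and nz: "f' t \<noteq> 0" "f'' \<noteq> 0"
    and rel: "\<forall>\<^sub>F k in at 0. \<bar>tangent_meet_height f f' t (t + k)\<bar> *
                \<bar>tangent_xint f f' (t + k) - tangent_xint f f' t\<bar> = L * \<bar>t * f (t + k) - (t + k) * f t\<bar>"
  shows "\<bar>f t\<bar> * \<bar>f t * f'' / (f' t)\<^sup>2\<bar> = L * \<bar>t * f' t - f t\<bar>"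
proof -
  have "((\<lambda>k. (tangent_xint f f' (t + k) - tangent_xint f f' t) / k) \<longlongrightarrow> f t * f'' / (f' t)\<^sup>2) (at 0)"
    using DERIV_tangent_xint[OF f f' nz(1)] by (simp add: DERIV_def)
  from tendsto_mult[OF tendsto_rabs[OF tangent_meet_height_tendsto[OF f f' nz(2)]] tendsto_rabs[OF this]]
  have lhs: "((\<lambda>k. \<bar>tangent_meet_height f f' t (t + k)\<bar> * \<bar>(tangent_xint f f' (t + k) - tangent_xint f f' t) / k\<bar>)
      \<longlongrightarrow> \<bar>f t\<bar> * \<bar>f t * f'' / (f' t)\<^sup>2\<bar>) (at 0)" .
  have "((\<lambda>k. (f (t + k) - f t) / k) \<longlongrightarrow> f' t) (at 0)"
    using f by (simp add: DERIV_def)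
  then have rhs: "((\<lambda>k. L * \<bar>t * ((f (t + k) - f t) / k) - f t\<bar>) \<longlongrightarrow> L * \<bar>t * f' t - f t\<bar>) (at 0)"
    by (intro tendsto_intros)
  have "\<forall>\<^sub>F k in at 0. \<bar>tangent_meet_height f f' t (t + k)\<bar> * \<bar>(tangent_xint f f' (t + k) - tangent_xint f f' t) / k\<bar>
      = L * \<bar>t * ((f (t + k) - f t) / k) - f t\<bar>"
    using rel eventually_neq_at_within[of 0 0]
  proof eventually_elim
    case (elim k)
    have "t * ((f (t + k) - f t) / k) - f t = (t * f (t + k) - (t + k) * f t) / k"
      using elim(2) by (simp add: field_simps)
    then show ?case using elim(1) by (simp add: abs_divide)
  qed
  with lhs have "((\<lambda>k. L * \<bar>t * ((f (t + k) - f t) / k) - f t\<bar>) \<longlongrightarrow> \<bar>f t\<bar> * \<bar>f t * f'' / (f' t)\<^sup>2\<bar>) (at 0)"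
    by (simp add: tendsto_cong)
  from tendsto_unique[OF _ this rhs] show ?thesis by simp
qed

lemma convex_tangent_signs:
  fixes f f' f'' :: "real \<Rightarrow> real"
  assumes der: "\<And>s. \<bar>s\<bar> < \<eta> \<Longrightarrow> DERIV f s :> f' s \<and> DERIV f' s :> f'' s \<and> f'' s > 0"
    and f0: "f 0 = 0" "f' 0 = 0" and t: "t \<noteq> 0" "\<bar>t\<bar> < \<eta>"
  shows "t * f' t > 0" "t * f' t - f t > 0"
proof -
  have inc: "f' a < f' b" if "a < b" "\<bar>a\<bar> < \<eta>" "\<bar>b\<bar> < \<eta>" for a b
  proof (rule DERIV_pos_imp_increasing[OF \<open>a < b\<close>])
    fix x assume "a \<le> x" "x \<le> b"
    then have "\<bar>x\<bar> < \<eta>" using that by linarith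
    then show "\<exists>y. DERIV f' x :> y \<and> y > 0" using der by blast
  qed
  have der1: "DERIV f x :> f' x" if "min 0 t \<le> x" "x \<le> max 0 t" for x
    using der[of x] that t by linarith
  have "t * f' t > 0 \<and> t * f' t - f t > 0"
  proof (cases "t > 0")
    case True
    obtain z where z: "0 < z" "z < t" "f t - f 0 = (t - 0) * f' z"
      using MVT2[OF True, of f f'] der1 True by auto
    have "f' 0 < f' z" "f' z < f' t" using inc z t by (simp_all add: abs_less_iff)
    then show ?thesis using z f0 True by (auto simp: algebra_simps)
  next
    case False
    then have "t < 0" using t by auto
    obtain z where z: "t < z" "z < 0" "f 0 - f t = (0 - t) * f' z"
      using MVT2[OF \<open>t < 0\<close>, of f f'] der1 \<open>t < 0\<close> by auto
    have "f' t < f' z" "f' z < f' 0" using inc z t by (simp_all add: abs_less_iff)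
    then show ?thesis using z f0 \<open>t < 0\<close> by (auto simp: algebra_simps mult_neg_neg)
  qed
  then show "t * f' t > 0" "t * f' t - f t > 0" by simp_all
qed

lemma tangent_ode_coefficient_eq_half:
  fixes f f' f'' :: "real \<Rightarrow> real"
  assumes \<eta>: "\<eta> > 0"
    and der: "\<And>s. \<bar>s\<bar> < \<eta> \<Longrightarrow> DERIV f s :> f' s \<and> DERIV f' s :> f'' s"
    and cont: "isCont f'' 0" and f0: "f 0 = 0" "f' 0 = 0" "f'' 0 > 0"
    and ode: "\<And>t. t \<noteq> 0 \<Longrightarrow> \<bar>t\<bar> < \<eta> \<Longrightarrow> (f t)\<^sup>2 * f'' t = L * (f' t)\<^sup>2 * (t * f' t - f t)"
  shows "L = 1/2"
proof -
  define c where "c = f'' 0"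
  have ev: "\<forall>\<^sub>F t in at (0::real). t \<noteq> 0 \<and> \<bar>t\<bar> < \<eta>"
    unfolding eventually_at using \<eta> by (auto intro!: exI[of _ \<eta>] simp: dist_real_def)
  have d0: "DERIV f 0 :> f' 0" "DERIV f' 0 :> f'' 0" using der[of 0] \<eta> by auto
  have lf': "((\<lambda>t. f' t / t) \<longlongrightarrow> c) (at 0)"
    using d0(2) f0 by (simp add: DERIV_def c_def)
  have lf: "((\<lambda>t. f t / t\<^sup>2) \<longlongrightarrow> c / 2) (at 0)"
  proof (rule lhopital[where f' = f' and g' = "\<lambda>t. 2 * t"])
    show "(f \<longlongrightarrow> 0) (at 0)" using DERIV_isCont[OF d0(1)] f0 by (simp add: isCont_def)
    show "((\<lambda>t. t\<^sup>2) \<longlongrightarrow> 0) (at (0::real))" by (intro tendsto_eq_intros) auto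
    show "\<forall>\<^sub>F t in at 0. t\<^sup>2 \<noteq> (0::real)" using ev by (auto elim: eventually_mono)
    show "\<forall>\<^sub>F t in at 0. 2 * t \<noteq> (0::real)" using ev by (auto elim: eventually_mono)
    show "\<forall>\<^sub>F t in at 0. DERIV f t :> f' t" using ev der by (auto elim: eventually_mono)
    show "\<forall>\<^sub>F t in at 0. DERIV (\<lambda>t. t\<^sup>2) t :> 2 * t"
      by (intro always_eventually allI) (auto intro!: derivative_eq_intros)
    show "((\<lambda>t. f' t / (2 * t)) \<longlongrightarrow> c / 2) (at 0)"
      using tendsto_divide[OF lf' tendsto_const[of 2]] by (simp add: mult.commute)
  qed
  have lf'': "(f'' \<longlongrightarrow> c) (at 0)" using cont by (simp add: isCont_def c_def)
  have "\<forall>\<^sub>F t in at 0. (f t / t\<^sup>2)\<^sup>2 * f'' t = L * (f' t / t)\<^sup>2 * (f' t / t - f t / t\<^sup>2)"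
    using ev
  proof eventually_elim
    case (elim t)
    have "(f t / t\<^sup>2)\<^sup>2 * f'' t = (f t)\<^sup>2 * f'' t / t ^ 4" by (simp add: power_divide field_simps)
    also have "\<dots> = L * (f' t)\<^sup>2 * (t * f' t - f t) / t ^ 4" using ode elim by simp
    also have "\<dots> = L * (f' t / t)\<^sup>2 * (f' t / t - f t / t\<^sup>2)"
      using elim by (simp add: field_simps power2_eq_square power4_eq_xxxx)
    finally show ?case .
  qed
  moreover have "((\<lambda>t. (f t / t\<^sup>2)\<^sup>2 * f'' t) \<longlongrightarrow> (c / 2)\<^sup>2 * c) (at 0)"
    by (intro tendsto_intros lf lf'')
  ultimately have "((\<lambda>t. L * (f' t / t)\<^sup>2 * (f' t / t - f t / t\<^sup>2)) \<longlongrightarrow> (c / 2)\<^sup>2 * c) (at 0)"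
    by (simp add: tendsto_cong)
  moreover have "((\<lambda>t. L * (f' t / t)\<^sup>2 * (f' t / t - f t / t\<^sup>2)) \<longlongrightarrow> L * c\<^sup>2 * (c - c / 2)) (at 0)"
    by (intro tendsto_intros lf lf')
  ultimately have "(c / 2)\<^sup>2 * c = L * c\<^sup>2 * (c - c / 2)" by (rule tendsto_unique[rotated]) simp
  moreover have "c > 0" using f0 c_def by simp
  ultimately show ?thesis by (simp add: power2_eq_square field_simps)
qed

lemma tangent_relation_imp_scaled_ode:
  fixes f f' f'' :: "real \<Rightarrow> real"
  assumes der: "\<And>s. \<bar>s\<bar> < \<eta> \<Longrightarrow> DERIV f s :> f' s \<and> DERIV f' s :> f'' s \<and> f'' s > 0"
    and f0: "f 0 = 0" "f' 0 = 0"
    and rel: "\<And>t1 t2. \<bar>t1\<bar> < \<eta> \<Longrightarrow> \<bar>t2\<bar> < \<eta> \<Longrightarrow> t1 \<noteq> 0 \<Longrightarrow> t2 \<noteq> 0 \<Longrightarrow> t1 \<noteq> t2 \<Longrightarrow>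
       \<bar>tangent_meet_height f f' t1 t2\<bar> * \<bar>tangent_xint f f' t2 - tangent_xint f f' t1\<bar>
         = L * \<bar>t1 * f t2 - t2 * f t1\<bar>"
    and t: "t \<noteq> 0" "\<bar>t\<bar> < \<eta>"
  shows "(f t)\<^sup>2 * f'' t = L * (f' t)\<^sup>2 * (t * f' t - f t)"
proof -
  have sg: "t * f' t > 0" "t * f' t - f t > 0" using convex_tangent_signs[OF der f0 t] by auto
  have f'': "f'' t > 0" using der t by blast
  have "\<forall>\<^sub>F k in at 0. k \<noteq> 0 \<and> \<bar>k\<bar> < min (\<eta> - \<bar>t\<bar>) \<bar>t\<bar>"
    unfolding eventually_at using t by (auto intro!: exI[of _ "min (\<eta> - \<bar>t\<bar>) \<bar>t\<bar>"] simp: dist_real_def)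
  then have "\<forall>\<^sub>F k in at 0. \<bar>tangent_meet_height f f' t (t + k)\<bar> *
              \<bar>tangent_xint f f' (t + k) - tangent_xint f f' t\<bar> = L * \<bar>t * f (t + k) - (t + k) * f t\<bar>"
    by (rule eventually_mono) (intro rel, use t in auto)
  from tangent_relation_derivative[OF _ _ _ _ this] der t sg f''
  have "\<bar>f t\<bar> * \<bar>f t * f'' t / (f' t)\<^sup>2\<bar> = L * \<bar>t * f' t - f t\<bar>" by force
  then have "(f t)\<^sup>2 * f'' t / (f' t)\<^sup>2 = L * (t * f' t - f t)"
    using sg f'' by (simp add: abs_mult power2_eq_square)
  moreover have "f' t \<noteq> 0" using sg by auto
  ultimately show ?thesis by (simp add: field_simps)
qed

lemma tangent_relation_imp_ode:
  fixes f f' f'' :: "real \<Rightarrow> real"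
  assumes \<eta>: "\<eta> > 0"
    and der: "\<And>s. \<bar>s\<bar> < \<eta> \<Longrightarrow> DERIV f s :> f' s \<and> DERIV f' s :> f'' s"
    and cont: "isCont f'' 0" and f0: "f 0 = 0" "f' 0 = 0" "f'' 0 > 0"
    and rel: "\<And>t1 t2. \<bar>t1\<bar> < \<eta> \<Longrightarrow> \<bar>t2\<bar> < \<eta> \<Longrightarrow> t1 \<noteq> 0 \<Longrightarrow> t2 \<noteq> 0 \<Longrightarrow> t1 \<noteq> t2 \<Longrightarrow>
       \<bar>tangent_meet_height f f' t1 t2\<bar> * \<bar>tangent_xint f f' t2 - tangent_xint f f' t1\<bar>
         = L * \<bar>t1 * f t2 - t2 * f t1\<bar>"
  shows "\<exists>\<eta>'>0. \<forall>t. \<bar>t\<bar> < \<eta>' \<longrightarrow> 2 * (f t)\<^sup>2 * f'' t = (f' t)\<^sup>2 * (t * f' t - f t)"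
proof -
  have "(f'' \<longlongrightarrow> f'' 0) (nhds 0)"
    using cont unfolding isCont_def tendsto_at_iff_tendsto_nhds .
  from order_tendstoD(1)[OF this f0(3)]
  obtain \<eta>' where "\<eta>' > 0" and pos: "\<And>t. dist t 0 < \<eta>' \<Longrightarrow> f'' t > 0"
    unfolding eventually_nhds_metric by blast
  define \<eta>'' where "\<eta>'' = min \<eta> \<eta>'"
  have "\<eta>'' > 0" using \<eta> \<open>\<eta>' > 0\<close> unfolding \<eta>''_def by simp
  have der': "DERIV f s :> f' s \<and> DERIV f' s :> f'' s \<and> f'' s > 0" if "\<bar>s\<bar> < \<eta>''" for s
    using der pos that unfolding \<eta>''_def by simp
  have ode: "(f t)\<^sup>2 * f'' t = L * (f' t)\<^sup>2 * (t * f' t - f t)" if "t \<noteq> 0" "\<bar>t\<bar> < \<eta>''" for t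
    by (rule tangent_relation_imp_scaled_ode[OF der' f0(1,2) rel that]) (simp_all add: \<eta>''_def)
  have "L = 1/2"
    by (rule tangent_ode_coefficient_eq_half[OF \<open>\<eta>'' > 0\<close> _ cont f0 ode]) (use der' in blast)
  have "2 * (f t)\<^sup>2 * f'' t = (f' t)\<^sup>2 * (t * f' t - f t)" if "\<bar>t\<bar> < \<eta>''" for t
  proof -
    have "(f t)\<^sup>2 * f'' t = 1/2 * (f' t)\<^sup>2 * (t * f' t - f t)"
      using ode[of t, unfolded \<open>L = 1/2\<close>] f0 that by (cases "t = 0") auto
    then show ?thesis by simp
  qed
  with \<open>\<eta>'' > 0\<close> show ?thesis by blast
qed

section \<open>Convex curves as local graphs\<close>

lemma C3_curve_on_vel:
  assumes "C3_curve_on X I" "s \<in> I"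
  shows "(X has_vector_derivative vel X s) (at s)"
  using assms vector_derivative_at unfolding C3_curve_on_def vel_def by metis

lemma C3_fun_on_derivs:
  assumes "C3_fun_on f S" "open S" "t \<in> S"
  shows "DERIV f t :> deriv f t" "DERIV (deriv f) t :> deriv (deriv f) t"
    and "isCont (deriv (deriv f)) t"
proof -
  obtain D1 D2 D3 where D: "\<And>t. t \<in> S \<Longrightarrow> DERIV f t :> D1 t \<and> DERIV D1 t :> D2 t \<and> DERIV D2 t :> D3 t"
    using assms(1) unfolding C3_fun_on_def by blast
  have D1: "deriv f t = D1 t" if "t \<in> S" for t using D that DERIV_imp_deriv by blast
  have dD1: "DERIV (deriv f) t :> D2 t" if "t \<in> S" for t
    using has_field_derivative_transform_within_open[of D1 "D2 t" t S] D D1 assms(2) that by auto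
  have D2: "deriv (deriv f) t = D2 t" if "t \<in> S" for t using dD1 that DERIV_imp_deriv by blast
  show "DERIV f t :> deriv f t" "DERIV (deriv f) t :> deriv (deriv f) t"
    using D D1 dD1 D2 assms(3) by auto
  have "\<forall>\<^sub>F s in nhds t. deriv (deriv f) s = D2 s"
    using D2 assms(2,3) eventually_nhds by blast
  moreover have "isCont D2 t" using D assms(3) DERIV_isCont by blast
  ultimately show "isCont (deriv (deriv f)) t" using isCont_cong by blast
qed

lemma DERIV_nonzero_imp_onto_nbhd:
  fixes g :: "real \<Rightarrow> real"
  assumes g: "DERIV g s0 :> g'" "g' \<noteq> 0" and \<rho>: "\<rho> > 0"
    and cont: "\<And>s. \<bar>s - s0\<bar> < \<rho> \<Longrightarrow> isCont g s"
  shows "\<exists>\<eta>>0. \<forall>t. \<bar>t - g s0\<bar> < \<eta> \<longrightarrow> (\<exists>s. \<bar>s - s0\<bar> < \<rho> \<and> g s = t)"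
proof -
  have "((\<lambda>k. (g (s0 + k) - g s0) / k * g') \<longlongrightarrow> g' * g') (at 0)"
    using tendsto_mult_right[OF g(1)[unfolded DERIV_def], of g'] by simp
  moreover have "g' * g' > 0" using g(2) not_real_square_gt_zero by blast
  ultimately have "\<forall>\<^sub>F k in at 0. (g (s0 + k) - g s0) / k * g' > 0"
    by (rule order_tendstoD)
  then obtain r where "r > 0" and r: "\<forall>k. k \<noteq> 0 \<and> dist k 0 < r \<longrightarrow> (g (s0 + k) - g s0) / k * g' > 0"
    unfolding eventually_at by blast
  define a where "a = min (r / 2) (\<rho> / 2)"
  have a: "a > 0" "a < r" "a < \<rho>" using \<open>r > 0\<close> \<rho> unfolding a_def by auto
  have "(g (s0 + a) - g s0) / a * g' > 0" "(g (s0 + - a) - g s0) / (- a) * g' > 0"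
    using r[rule_format, of a] r[rule_format, of "-a"] a by (simp_all add: dist_real_def)
  then have sg: "(g (s0 + a) - g s0) * g' > 0" "(g (s0 - a) - g s0) * g' < 0"
    using a by (simp_all add: zero_less_divide_iff divide_less_0_iff)
  define \<eta> where "\<eta> = min \<bar>g (s0 + a) - g s0\<bar> \<bar>g (s0 - a) - g s0\<bar>"
  have "\<eta> > 0" using sg unfolding \<eta>_def by auto
  moreover have "\<exists>s. \<bar>s - s0\<bar> < \<rho> \<and> g s = t" if t: "\<bar>t - g s0\<bar> < \<eta>" for t
  proof -
    have cont': "\<forall>x. s0 - a \<le> x \<and> x \<le> s0 + a \<longrightarrow> isCont g x" using cont a by auto
    have "s0 - a \<le> s0 + a" using a by simp
    consider "g (s0 - a) < g s0" "g s0 < g (s0 + a)" | "g (s0 + a) < g s0" "g s0 < g (s0 - a)"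
      using sg g(2) by (cases "g' > 0") (simp_all add: zero_less_mult_iff mult_less_0_iff)
    then obtain s where "s0 - a \<le> s" "s \<le> s0 + a" "g s = t"
    proof cases
      case 1
      then have "g (s0 - a) \<le> t" "t \<le> g (s0 + a)" using t unfolding \<eta>_def by linarith+
      then show ?thesis using IVT[OF _ _ \<open>s0 - a \<le> s0 + a\<close> cont'] that by blast
    next
      case 2
      then have "g (s0 + a) \<le> t" "t \<le> g (s0 - a)" using t unfolding \<eta>_def by linarith+
      then show ?thesis using IVT2[OF _ _ \<open>s0 - a \<le> s0 + a\<close> cont'] that by blast
    qed
    then show ?thesis using a by (intro exI[of _ s]) auto
  qed
  ultimately show ?thesis by blast
qed

lemma has_vector_derivative_graph_reparam:
  assumes "open S" "s \<in> S" and eq: "\<And>s'. s' \<in> S \<Longrightarrow> X s' = Z + x s' *\<^sub>R e + f (x s') *\<^sub>R n"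
    and x: "(x has_real_derivative x') (at s)" and f: "(f has_real_derivative f') (at (x s))"
    and X: "(X has_vector_derivative v) (at s)"
  shows "v = x' *\<^sub>R (e + f' *\<^sub>R n)"
proof -
  define G where "G t = Z + t *\<^sub>R e + f t *\<^sub>R n" for t
  have "(G has_vector_derivative (e + f' *\<^sub>R n)) (at (x s))"
    unfolding G_def using f
    by (auto intro!: derivative_eq_intros simp: has_real_derivative_iff_has_vector_derivative[symmetric])
  from vector_diff_chain_at[OF x[unfolded has_real_derivative_iff_has_vector_derivative] this]
  have "(X has_vector_derivative x' *\<^sub>R (e + f' *\<^sub>R n)) (at s)"
    by (rule has_vector_derivative_transform_within_open[OF _ assms(1,2)]) (simp add: eq G_def)
  with X show ?thesis using vector_derivative_unique_at by blast
qed

lemma strictly_convex_nonneg_pos: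
  assumes conv: "strictly_convex_fun_on f {-d<..<d}" and nonneg: "\<And>t. \<bar>t\<bar> < d \<Longrightarrow> f t \<ge> 0"
    and f0: "f 0 = 0" and t: "\<bar>t\<bar> < d" "t \<noteq> 0"
  shows "f t > 0"
proof -
  have "t \<in> {-d<..<d}" "0 \<in> {-d<..<d}" using t by auto
  then have "f ((1/2) * t + (1 - 1/2) * 0) < (1/2) * f t + (1 - 1/2) * f 0"
    using conv t(2) unfolding strictly_convex_fun_on_def
    by (metis field_sum_of_halves half_gt_zero_iff less_add_same_cancel1 zero_less_one)
  moreover have "f (t / 2) \<ge> 0" using nonneg t by simp
  ultimately show ?thesis using f0 by simp
qed

lemma convex_curve_near_point_on_graph:
  fixes X :: "real \<Rightarrow> real \<times> real" and C :: "(real \<times> real) set"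
  assumes cvx: "convex C" and XC: "X ` I \<subseteq> frontier C" and I: "open I" "s0 \<in> I"
    and Xc: "isCont X s0"
    and frame: "norm e = 1" "norm n = 1" "inner e n = 0"
    and graph: "\<forall>t. \<bar>t\<bar> < d \<longrightarrow> (\<exists>s\<in>I. inner (X s - X s0) e = t \<and> inner (X s - X s0) n = f t)"
    and d: "d > 0" and conv: "strictly_convex_fun_on f {-d<..<d}"
    and nonneg: "\<And>t. \<bar>t\<bar> < d \<Longrightarrow> f t \<ge> 0" and f0: "f 0 = 0"
  defines "x \<equiv> \<lambda>s. inner (X s - X s0) e"
  shows "\<exists>\<epsilon>>0. \<forall>s. \<bar>s - s0\<bar> < \<epsilon> \<longrightarrow>
           s \<in> I \<and> \<bar>x s\<bar> < d \<and> X s = X s0 + x s *\<^sub>R e + f (x s) *\<^sub>R n"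
proof -
  have D: "det2 e n \<noteq> 0" using orthonormal_frame_det2[OF frame] .
  define y where "y s = inner (X s - X s0) n" for s
  have coords: "X s = X s0 + x s *\<^sub>R e + y s *\<^sub>R n" for s
    using orthonormal_frame_expand[OF frame, of "X s - X s0"] unfolding x_def y_def
    by (simp add: algebra_simps)
  have on_graph: "X s0 + t *\<^sub>R e + f t *\<^sub>R n \<in> frontier C" if t: "\<bar>t\<bar> < d" for t
  proof -
    obtain s where "s \<in> I" "x s = t" "y s = f t"
      using graph t unfolding x_def y_def by blast
    then show ?thesis using coords[of s] XC by auto
  qed
  define b where "b = d / 2"
  have b: "0 < b" "b < d" using d unfolding b_def by auto
  have fb: "f (-b) > 0" "f b > 0"
    using strictly_convex_nonneg_pos[OF conv nonneg f0] b by auto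
  have "isCont x s0" "isCont y s0"
    unfolding x_def y_def using Xc by (auto intro!: continuous_intros)
  then have x: "(x \<longlongrightarrow> 0) (nhds s0)" and y: "(y \<longlongrightarrow> 0) (nhds s0)"
    unfolding isCont_def tendsto_at_iff_tendsto_nhds by (simp_all add: x_def y_def)
  have "\<forall>\<^sub>F s in nhds s0. s \<in> I" using I eventually_nhds_in_open by blast
  moreover have "\<forall>\<^sub>F s in nhds s0. \<bar>x s\<bar> < b" using order_tendstoD(2)[OF tendsto_rabs_zero[OF x] b(1)] .
  moreover have "\<forall>\<^sub>F s in nhds s0. y s < min (f (-b)) (f b)"
    using order_tendstoD(2)[OF y, of "min (f (-b)) (f b)"] fb by simp
  ultimately have "\<forall>\<^sub>F s in nhds s0. s \<in> I \<and> \<bar>x s\<bar> < b \<and> y s < min (f (-b)) (f b)"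
    by eventually_elim blast
  then obtain \<epsilon> where "\<epsilon> > 0"
    and \<epsilon>: "\<And>s. dist s s0 < \<epsilon> \<Longrightarrow> s \<in> I \<and> \<bar>x s\<bar> < b \<and> y s < min (f (-b)) (f b)"
    unfolding eventually_nhds_metric by blast
  have "s \<in> I \<and> \<bar>x s\<bar> < d \<and> X s = X s0 + x s *\<^sub>R e + f (x s) *\<^sub>R n" if "\<bar>s - s0\<bar> < \<epsilon>" for s
  proof -
    have s: "s \<in> I" "\<bar>x s\<bar> < b" "y s < min (f (-b)) (f b)"
      using \<epsilon> that by (auto simp: dist_real_def)
    have "X s0 + x s *\<^sub>R e + y s *\<^sub>R n \<in> frontier C"
      using XC s(1) coords[of s] by auto
    from convex_frontier_on_graph[OF cvx D on_graph conv b s(2) this] s(3)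
    have "y s = f (x s)" by simp
    then show ?thesis using coords[of s] s b by auto
  qed
  with \<open>\<epsilon> > 0\<close> show ?thesis by blast
qed

lemma strictly_convex_curve_graph_param:
  fixes X :: "real \<Rightarrow> real \<times> real" and C :: "(real \<times> real) set"
  assumes cvx: "convex C" and XC: "X ` I \<subseteq> frontier C" and I: "open I" "s0 \<in> I"
    and Xd: "\<And>s. s \<in> I \<Longrightarrow> (X has_vector_derivative vel X s) (at s)"
    and arc: "\<And>s. s \<in> I \<Longrightarrow> norm (vel X s) = 1"
    and frame: "norm e = 1" "norm n = 1" "inner e n = 0" "e = vel X s0 \<or> e = - vel X s0"
    and graph: "\<forall>t. \<bar>t\<bar> < d \<longrightarrow> (\<exists>s\<in>I. inner (X s - X s0) e = t \<and> inner (X s - X s0) n = f t)"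
    and d: "d > 0" and conv: "strictly_convex_fun_on f {-d<..<d}"
    and nonneg: "\<And>t. \<bar>t\<bar> < d \<Longrightarrow> f t \<ge> 0" and f0: "f 0 = 0"
    and fder: "\<And>t. \<bar>t\<bar> < d \<Longrightarrow> DERIV f t :> f' t"
    and \<rho>: "\<rho> > 0"
  shows "\<exists>\<eta>>0. \<forall>t. \<bar>t\<bar> < \<eta> \<longrightarrow> (\<exists>s\<in>I. \<bar>s - s0\<bar> < \<rho> \<and> X s = X s0 + t *\<^sub>R e + f t *\<^sub>R n \<and>
                                    (\<exists>c. c \<noteq> 0 \<and> vel X s = c *\<^sub>R (e + f' t *\<^sub>R n)))"
proof -
  define x where "x s = inner (X s - X s0) e" for s
  have "isCont X s0" using Xd[OF I(2)] has_vector_derivative_continuous by blast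
  from convex_curve_near_point_on_graph[OF cvx XC I this frame(1-3) graph d conv nonneg f0]
  obtain \<epsilon> where "\<epsilon> > 0"
    and near: "\<And>s. \<bar>s - s0\<bar> < \<epsilon> \<Longrightarrow> s \<in> I \<and> \<bar>x s\<bar> < d \<and> X s = X s0 + x s *\<^sub>R e + f (x s) *\<^sub>R n"
    unfolding x_def by blast
  have xder: "DERIV x s :> inner (vel X s) e" if "s \<in> I" for s
  proof -
    have "(X has_derivative (\<lambda>k. k *\<^sub>R vel X s)) (at s)"
      using Xd[OF that] by (simp add: has_vector_derivative_def)
    then have "(x has_derivative (\<lambda>k. inner (k *\<^sub>R vel X s - 0) e)) (at s)"
      unfolding x_def by (intro has_derivative_inner_left has_derivative_diff has_derivative_const)
    then show ?thesis by (simp add: has_field_derivative_def mult_commute_abs)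
  qed
  have "inner (vel X s0) e \<noteq> 0"
    using frame(1,4) by (auto simp: dot_square_norm)
  moreover have "min \<rho> \<epsilon> > 0" using \<rho> \<open>\<epsilon> > 0\<close> by simp
  moreover have "isCont x s" if "\<bar>s - s0\<bar> < min \<rho> \<epsilon>" for s
    using near[of s] that DERIV_isCont[OF xder] by simp
  ultimately obtain \<eta> where "\<eta> > 0" and onto: "\<And>t. \<bar>t - x s0\<bar> < \<eta> \<Longrightarrow> \<exists>s. \<bar>s - s0\<bar> < min \<rho> \<epsilon> \<and> x s = t"
    using DERIV_nonzero_imp_onto_nbhd[OF xder[OF I(2)]] by meson
  have "\<exists>s\<in>I. \<bar>s - s0\<bar> < \<rho> \<and> X s = X s0 + t *\<^sub>R e + f t *\<^sub>R n \<and>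
          (\<exists>c. c \<noteq> 0 \<and> vel X s = c *\<^sub>R (e + f' t *\<^sub>R n))" if t: "\<bar>t\<bar> < \<eta>" for t
  proof -
    obtain s where s: "\<bar>s - s0\<bar> < \<rho>" "\<bar>s - s0\<bar> < \<epsilon>" "x s = t"
      using onto[of t] t by (auto simp: x_def)
    have sI: "s \<in> I" and "\<bar>t\<bar> < d" and Xs: "X s = X s0 + t *\<^sub>R e + f t *\<^sub>R n"
      using near[OF s(2)] s(3) by auto
    have "vel X s = inner (vel X s) e *\<^sub>R (e + f' t *\<^sub>R n)"
    proof (rule has_vector_derivative_graph_reparam[OF open_ball])
      show "s \<in> ball s0 \<epsilon>" using s(2) by (simp add: dist_real_def)
      show "X s' = X s0 + x s' *\<^sub>R e + f (x s') *\<^sub>R n" if "s' \<in> ball s0 \<epsilon>" for s'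
      proof -
        have "\<bar>s' - s0\<bar> < \<epsilon>" using that by (simp add: dist_real_def abs_minus_commute)
        with near show ?thesis by blast
      qed
    qed (use xder[OF sI] fder[OF \<open>\<bar>t\<bar> < d\<close>] Xd[OF sI] s(3) in auto)
    moreover have "inner (vel X s) e \<noteq> 0"
      using calculation arc[OF sI] by (metis norm_zero scaleR_zero_left zero_neq_one)
    ultimately show ?thesis using sI s(1) Xs by blast
  qed
  with \<open>\<eta> > 0\<close> show ?thesis by blast
qed

lemma graph_param_tangent_relation:
  fixes X :: "real \<Rightarrow> real \<times> real"
  assumes D: "det2 e n \<noteq> 0" and v0: "vel X s0 = c0 *\<^sub>R e" "c0 \<noteq> 0"
    and param: "\<And>t. \<bar>t\<bar> < \<eta> \<Longrightarrow> \<exists>s\<in>I. \<bar>s - s0\<bar> < \<delta> \<and> X s = X s0 + t *\<^sub>R e + f t *\<^sub>R n \<and>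
                                    (\<exists>c. c \<noteq> 0 \<and> vel X s = c *\<^sub>R (e + m t *\<^sub>R n))"
    and UT: "\<forall>h1 h2. \<bar>h1\<bar> < \<delta> \<and> \<bar>h2\<bar> < \<delta> \<and> s0 + h1 \<in> I \<and> s0 + h2 \<in> I \<and>
               X s0 \<noteq> X (s0 + h1) \<and> X s0 \<noteq> X (s0 + h2) \<and> X (s0 + h1) \<noteq> X (s0 + h2) \<longrightarrow>
               U_area X s0 h1 h2 = L * T_area X s0 h1 h2"
    and t: "\<bar>t1\<bar> < \<eta>" "\<bar>t2\<bar> < \<eta>" "t1 \<noteq> 0" "t2 \<noteq> 0" "t1 \<noteq> t2"
  shows "\<bar>tangent_meet_height f m t1 t2\<bar> * \<bar>tangent_xint f m t2 - tangent_xint f m t1\<bar>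
           = L * \<bar>t1 * f t2 - t2 * f t1\<bar>"
proof -
  obtain s1 c1 where s1: "s1 \<in> I" "\<bar>s1 - s0\<bar> < \<delta>" "X s1 = X s0 + t1 *\<^sub>R e + f t1 *\<^sub>R n"
    and c1: "c1 \<noteq> 0" "vel X s1 = c1 *\<^sub>R (e + m t1 *\<^sub>R n)"
    using param[OF t(1)] by blast
  obtain s2 c2 where s2: "s2 \<in> I" "\<bar>s2 - s0\<bar> < \<delta>" "X s2 = X s0 + t2 *\<^sub>R e + f t2 *\<^sub>R n"
    and c2: "c2 \<noteq> 0" "vel X s2 = c2 *\<^sub>R (e + m t2 *\<^sub>R n)"
    using param[OF t(2)] by blast
  define h1 h2 where "h1 = s1 - s0" and "h2 = s2 - s0"
  have X1: "X (s0 + h1) = X s0 + t1 *\<^sub>R e + f t1 *\<^sub>R n" and v1: "vel X (s0 + h1) = c1 *\<^sub>R (e + m t1 *\<^sub>R n)"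
    and X2: "X (s0 + h2) = X s0 + t2 *\<^sub>R e + f t2 *\<^sub>R n" and v2: "vel X (s0 + h2) = c2 *\<^sub>R (e + m t2 *\<^sub>R n)"
    using s1 c1 s2 c2 unfolding h1_def h2_def by simp_all
  have "X s0 = X s0 + 0 *\<^sub>R e + 0 *\<^sub>R n" by simp
  then have "X s0 \<noteq> X (s0 + h1) \<and> X s0 \<noteq> X (s0 + h2) \<and> X (s0 + h1) \<noteq> X (s0 + h2)"
    unfolding X1 X2 using frame_coords_eq_iff[OF D] t(3-5) by metis
  then have "U_area X s0 h1 h2 = L * T_area X s0 h1 h2"
    using UT s1 s2 unfolding h1_def h2_def by simp
  then show ?thesis
    unfolding U_area_frame[OF D v0 X1 v1 c1(1) X2 v2 c2(1)] T_area_frame[OF X1 X2]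
    using D by (simp add: abs_mult)
qed

theorem lemma7:
  fixes X :: "real \<Rightarrow> real \<times> real" and I :: "real set"
    and lam :: "real \<Rightarrow> real"
  assumes curve: "strictly_convex_curve X I"
    and arc: "arclength_param X I"
    and UT: "\<forall>s\<in>I. \<exists>\<delta>>0. \<forall>h1 h2. \<bar>h1\<bar> < \<delta> \<and> \<bar>h2\<bar> < \<delta> \<and>
               s + h1 \<in> I \<and> s + h2 \<in> I \<and>
               X s \<noteq> X (s + h1) \<and> X s \<noteq> X (s + h2) \<and> X (s + h1) \<noteq> X (s + h2) \<longrightarrow>
               U_area X s h1 h2 = lam s * T_area X s h1 h2"
    and s0: "s0 \<in> I"
    and frame: "norm e = 1" "norm n = 1" "inner e n = 0"
               "e = vel X s0 \<or> e = - vel X s0"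
    and f_pos: "d > 0"
    and graph: "\<forall>t. \<bar>t\<bar> < d \<longrightarrow>
                  (\<exists>s\<in>I. inner (X s - X s0) e = t \<and> inner (X s - X s0) n = f t)"
    and f_nonneg: "\<forall>t. \<bar>t\<bar> < d \<longrightarrow> f t \<ge> 0"
    and f_C3: "C3_fun_on f {-d<..<d}"
    and f_conv: "strictly_convex_fun_on f {-d<..<d}"
    and f0: "f 0 = 0" "deriv f 0 = 0" "deriv (deriv f) 0 > 0"
  shows "\<exists>\<eta>>0. \<forall>t. \<bar>t\<bar> < \<eta> \<longrightarrow>
           2 * (f t)\<^sup>2 * deriv (deriv f) t = (deriv f t)\<^sup>2 * (t * deriv f t - f t)"
proof -
  obtain C where cvx: "convex C" and XC: "X ` I \<subseteq> frontier C" and I: "open I"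
    using curve unfolding strictly_convex_curve_def simple_convex_curve_def by blast
  have Xd: "\<And>s. s \<in> I \<Longrightarrow> (X has_vector_derivative vel X s) (at s)"
    using curve C3_curve_on_vel unfolding strictly_convex_curve_def by blast
  have fd: "DERIV f t :> deriv f t" "DERIV (deriv f) t :> deriv (deriv f) t"
    "isCont (deriv (deriv f)) t" if "\<bar>t\<bar> < d" for t
    using C3_fun_on_derivs[OF f_C3 open_greaterThanLessThan] that by (simp_all add: abs_less_iff)
  obtain \<delta> where "\<delta> > 0" and UT0: "\<forall>h1 h2. \<bar>h1\<bar> < \<delta> \<and> \<bar>h2\<bar> < \<delta> \<and> s0 + h1 \<in> I \<and> s0 + h2 \<in> I \<and>
      X s0 \<noteq> X (s0 + h1) \<and> X s0 \<noteq> X (s0 + h2) \<and> X (s0 + h1) \<noteq> X (s0 + h2) \<longrightarrow>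
      U_area X s0 h1 h2 = lam s0 * T_area X s0 h1 h2"
    using UT s0 by blast
  obtain \<eta> where "\<eta> > 0" and param: "\<And>t. \<bar>t\<bar> < \<eta> \<Longrightarrow> \<exists>s\<in>I. \<bar>s - s0\<bar> < \<delta> \<and>
      X s = X s0 + t *\<^sub>R e + f t *\<^sub>R n \<and> (\<exists>c. c \<noteq> 0 \<and> vel X s = c *\<^sub>R (e + deriv f t *\<^sub>R n))"
    using strictly_convex_curve_graph_param[OF cvx XC I s0 Xd _ frame graph f_pos f_conv _ f0(1) fd(1) \<open>\<delta> > 0\<close>]
      arc f_nonneg unfolding arclength_param_def by blast
  obtain c0 where v0: "vel X s0 = c0 *\<^sub>R e" "c0 \<noteq> 0"
    using frame(4) by (metis add.inverse_inverse scaleR_one scaleR_minus1_left zero_neq_neg_one one_neq_zero)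
  show ?thesis
  proof (rule tangent_relation_imp_ode[of "min \<eta> d"])
    show "\<bar>tangent_meet_height f (deriv f) t1 t2\<bar> * \<bar>tangent_xint f (deriv f) t2 - tangent_xint f (deriv f) t1\<bar>
          = lam s0 * \<bar>t1 * f t2 - t2 * f t1\<bar>"
      if "\<bar>t1\<bar> < min \<eta> d" "\<bar>t2\<bar> < min \<eta> d" "t1 \<noteq> 0" "t2 \<noteq> 0" "t1 \<noteq> t2" for t1 t2
      using graph_param_tangent_relation[OF orthonormal_frame_det2[OF frame(1-3)] v0 param UT0] that by simp
  qed (use \<open>\<eta> > 0\<close> f_pos fd f0 in auto)
qed

end
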